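(* Let $X_1,\dots,X_t$ be independent symmetric real random variables, and suppose that for some $x>0$ and $p>0$ we have $\Pr[|X_i|<x]>p$ for all $i\in[t]$. Then \[ \Pr\left[\left|\operatorname{median}_{i\in[t]} X_i\right|\ge x\right] < 2e^{-tp^2/2}. \]
   Context: A real random variable $Y$ is symmetric if $Y$ and $-Y$ have the same distribution. For even $t$ the median is the average of the two middle values. *)

theory Defs
  imports "HOL-Probability.Probability"
begin

definition median_list :: "real list \<Rightarrow> real" where
  "median_list xs = (let ys = sort xs; n = length xs in
     if odd n then ys ! (n div 2)
     else (ys ! (n div 2 - 1) + ys ! (n div 2)) / 2)"

definition symmetric_rv :: "'a measure \<Rightarrow> ('a \<Rightarrow> real) \<Rightarrow> bool" where
  "symmetric_rv M Y \<longleftrightarrow> distr M borel Y = distr M borel (\<lambda>\<omega>. - Y \<omega>)"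

end

theory Submission
  imports Defs
begin

text \<open>If the median of \<open>X\<^sub>1, \<dots>, X\<^sub>t\<close> is at least \<open>x\<close> in absolute value,
  then at least half of the \<open>X\<^sub>i\<close> satisfy \<open>X\<^sub>i \<ge> x\<close> or at least half satisfy
  \<open>X\<^sub>i \<le> -x\<close>. By symmetry and \<open>\<P>[\<bar>X\<^sub>i\<bar> < x] > p\<close>, each of these tails has probability
  below \<open>(1 - p)/2\<close>, so Hoeffding's inequality for the sum of the \<open>t\<close> independent tail
  indicators bounds each of the two events by \<open>exp (-t p\<^sup>2/2)\<close>.\<close>

lemma median_list_between_middle:
  assumes "xs \<noteq> []"
  shows "sort xs ! ((length xs - 1) div 2) \<le> median_list xs"
    and "median_list xs \<le> sort xs ! (length xs div 2)"
proof -
  define n where "n = length xs"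
  have middle_le: "sort xs ! (n div 2 - 1) \<le> sort xs ! (n div 2)"
    using assms by (intro sorted_nth_mono) (auto simp: n_def)
  have "(n - 1) div 2 = (if odd n then n div 2 else n div 2 - 1)"
    using assms by (auto simp: n_def elim: oddE evenE)
  then show "sort xs ! ((length xs - 1) div 2) \<le> median_list xs"
    and "median_list xs \<le> sort xs ! (length xs div 2)"
    using middle_le by (auto simp: median_list_def Let_def n_def[symmetric])
qed

lemma sorted_length_filter_nth_le:
  assumes "sorted ys" and "k < length ys"
  shows "length ys - k \<le> length (filter (\<lambda>v. ys ! k \<le> v) ys)"
proof -
  have "{k..<length ys} \<subseteq> {j. j < length ys \<and> ys ! k \<le> ys ! j}"
    using assms by (auto intro: sorted_nth_mono)
  then have "card {k..<length ys} \<le> card {j. j < length ys \<and> ys ! k \<le> ys ! j}"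
    by (intro card_mono) auto
  then show ?thesis by (simp add: length_filter_conv_card)
qed

lemma sorted_length_filter_le_nth:
  assumes "sorted ys" and "k < length ys"
  shows "k + 1 \<le> length (filter (\<lambda>v. v \<le> ys ! k) ys)"
proof -
  have "{..k} \<subseteq> {j. j < length ys \<and> ys ! j \<le> ys ! k}"
    using assms by (auto intro: sorted_nth_mono)
  then have "card {..k} \<le> card {j. j < length ys \<and> ys ! j \<le> ys ! k}"
    by (intro card_mono) auto
  then show ?thesis by (simp add: length_filter_conv_card)
qed

lemma length_filter_sort: "length (filter P (sort xs)) = length (filter P xs)"
  by (simp add: filter_sort)

lemma length_filter_mono:
  assumes "\<And>v. P v \<Longrightarrow> Q v"
  shows "length (filter P xs) \<le> length (filter Q xs)"
  using assms by (induction xs) auto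

lemma median_list_ge_imp_half_ge:
  fixes xs :: "real list"
  assumes "xs \<noteq> []" and "y \<le> median_list xs"
  shows "length xs \<le> 2 * length (filter (\<lambda>v. y \<le> v) xs)"
proof -
  let ?k = "length xs div 2"
  have "length (sort xs) - ?k \<le> length (filter (\<lambda>v. sort xs ! ?k \<le> v) (sort xs))"
    using assms(1) by (intro sorted_length_filter_nth_le) auto
  also have "\<dots> \<le> length (filter (\<lambda>v. y \<le> v) (sort xs))"
    using assms median_list_between_middle(2)[OF assms(1)] by (intro length_filter_mono) auto
  finally show ?thesis by (simp add: length_filter_sort)
qed

lemma median_list_le_imp_half_le:
  fixes xs :: "real list"
  assumes "xs \<noteq> []" and "median_list xs \<le> y"
  shows "length xs \<le> 2 * length (filter (\<lambda>v. v \<le> y) xs)"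
proof -
  let ?k = "(length xs - 1) div 2"
  have "?k + 1 \<le> length (filter (\<lambda>v. v \<le> sort xs ! ?k) (sort xs))"
    using assms(1) by (intro sorted_length_filter_le_nth) (auto intro: le_less_trans[OF div_le_dividend])
  also have "\<dots> \<le> length (filter (\<lambda>v. v \<le> y) (sort xs))"
    using assms median_list_between_middle(1)[OF assms(1)] by (intro length_filter_mono) auto
  finally show ?thesis by (simp add: length_filter_sort)
qed

lemma abs_median_list_ge_imp_half_tail:
  fixes xs :: "real list"
  assumes "xs \<noteq> []" and "x \<le> \<bar>median_list xs\<bar>"
  shows "length xs \<le> 2 * length (filter (\<lambda>v. x \<le> v) xs)
       \<or> length xs \<le> 2 * length (filter (\<lambda>v. v \<le> -x) xs)"
  using assms median_list_ge_imp_half_ge median_list_le_imp_half_le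
  by (cases "x \<le> median_list xs") (auto simp: abs_if split: if_splits)

lemma length_filter_map_upt_eq_sum_indicator:
  fixes g :: "nat \<Rightarrow> real"
  shows "real (length (filter P (map g [1..<t+1]))) = (\<Sum>i\<in>{1..t}. indicator {v. P v} (g i))"
proof -
  have "length (filter P (map g [1..<t+1])) = card ({i. P (g i)} \<inter> set [1..<t+1])"
    by (simp add: filter_map distinct_length_filter comp_def)
  also have "{i. P (g i)} \<inter> set [1..<t+1] = {i\<in>{1..t}. P (g i)}" by auto
  finally have "length (filter P (map g [1..<t+1])) = card {i\<in>{1..t}. P (g i)}" .
  then show ?thesis
    by (simp add: indicator_def sum.If_cases Int_def conj_commute)
qed

lemma (in prob_space) symmetric_rv_prob_ge_eq_prob_le:
  assumes X: "X \<in> borel_measurable M" and "symmetric_rv M X"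
  shows "prob {\<omega>\<in>space M. x \<le> X \<omega>} = prob {\<omega>\<in>space M. X \<omega> \<le> -x}"
proof -
  have "measure (distr M borel X) {x..} = measure (distr M borel (\<lambda>\<omega>. - X \<omega>)) {x..}"
    using assms(2) by (simp add: symmetric_rv_def)
  then have "prob (X -` {x..} \<inter> space M) = prob ((\<lambda>\<omega>. - X \<omega>) -` {x..} \<inter> space M)"
    using X by (simp add: measure_distr)
  then show ?thesis
    by (simp add: vimage_def Int_def conj_commute le_minus_iff)
qed

lemma (in prob_space) symmetric_rv_upper_tail_lt:
  assumes X: "X \<in> borel_measurable M" and "symmetric_rv M X" and "0 < x"
    and "p < prob {\<omega>\<in>space M. \<bar>X \<omega>\<bar> < x}"
  shows "prob {\<omega>\<in>space M. x \<le> X \<omega>} < (1 - p) / 2"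
proof -
  have "1 - prob {\<omega>\<in>space M. \<bar>X \<omega>\<bar> < x} = prob {\<omega>\<in>space M. x \<le> \<bar>X \<omega>\<bar>}"
    using X by (subst prob_compl[symmetric]) (auto intro!: arg_cong[where f = prob])
  also have "\<dots> = prob ({\<omega>\<in>space M. x \<le> X \<omega>} \<union> {\<omega>\<in>space M. X \<omega> \<le> -x})"
    by (intro arg_cong[where f = prob]) auto
  also have "\<dots> = prob {\<omega>\<in>space M. x \<le> X \<omega>} + prob {\<omega>\<in>space M. X \<omega> \<le> -x}"
    using X \<open>0 < x\<close> by (intro finite_measure_Union) auto
  also have "\<dots> = 2 * prob {\<omega>\<in>space M. x \<le> X \<omega>}"
    using symmetric_rv_prob_ge_eq_prob_le[OF X assms(2)] by simp
  finally show ?thesis using assms(4) by simp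
qed

lemma (in prob_space) prob_half_in_set_lt_exp:
  fixes X :: "'i \<Rightarrow> 'a \<Rightarrow> real"
  assumes I: "finite I" "I \<noteq> {}"
    and X: "\<And>i. i \<in> I \<Longrightarrow> X i \<in> borel_measurable M"
    and indep: "indep_vars (\<lambda>_. borel) X I"
    and A: "A \<in> sets borel" and "0 \<le> p"
    and tail: "\<And>i. i \<in> I \<Longrightarrow> prob {\<omega>\<in>space M. X i \<omega> \<in> A} < (1 - p) / 2"
  shows "prob {\<omega>\<in>space M. real (card I) \<le> 2 * (\<Sum>i\<in>I. indicator A (X i \<omega>))}
           < exp (- real (card I) * p\<^sup>2 / 2)"
proof -
  define n where "n = real (card I)"
  have n: "0 < n" using I by (simp add: n_def card_gt_0_iff)
  define Y where "Y i \<omega> = (indicator A (X i \<omega>) :: real)" for i \<omega>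
  define \<mu> where "\<mu> = (\<Sum>i\<in>I. expectation (Y i))"
  have EY: "expectation (Y i) = prob {\<omega>\<in>space M. X i \<omega> \<in> A}" if "i \<in> I" for i
  proof -
    have "{\<omega>\<in>space M. X i \<omega> \<in> A} \<in> sets M"
      using measurable_sets[OF X[OF that] A] by (simp add: vimage_def Int_def conj_commute)
    moreover have "expectation (Y i) = expectation (indicator {\<omega>\<in>space M. X i \<omega> \<in> A})"
      by (intro Bochner_Integration.integral_cong) (auto simp: Y_def indicator_def)
    ultimately show ?thesis by simp
  qed
  interpret Hoeffding_ineq M I Y "\<lambda>_. 0" "\<lambda>_. 1" \<mu>
  proof unfold_locales
    show "indep_vars (\<lambda>_. borel) Y I"
      unfolding Y_def using indep by (rule indep_vars_compose2) (use A in auto)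
  qed (auto simp: I Y_def \<mu>_def)
  define \<epsilon> where "\<epsilon> = n / 2 - \<mu>"
  have "\<mu> < (\<Sum>i\<in>I. (1 - p) / 2)"
    unfolding \<mu>_def using I by (intro sum_strict_mono) (use tail in \<open>auto simp: EY\<close>)
  then have \<epsilon>: "n * p / 2 < \<epsilon>" by (simp add: \<epsilon>_def n_def algebra_simps)
  have np: "0 \<le> n * p / 2" using n \<open>0 \<le> p\<close> by simp
  have "prob {\<omega>\<in>space M. \<mu> + \<epsilon> \<le> (\<Sum>i\<in>I. Y i \<omega>)} \<le> exp (-2 * \<epsilon>\<^sup>2 / (\<Sum>i\<in>I. (1 - 0)\<^sup>2))"
    using \<epsilon> np I by (intro Hoeffding_ineq_ge) auto
  also have "\<dots> = exp (-2 * \<epsilon>\<^sup>2 / n)" by (simp add: n_def)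
  also have "\<dots> < exp (- n * p\<^sup>2 / 2)"
  proof -
    have "(n * p / 2)\<^sup>2 < \<epsilon>\<^sup>2" using \<epsilon> np by (intro power_strict_mono) auto
    then show ?thesis using n by (simp add: field_simps power2_eq_square)
  qed
  finally show ?thesis by (simp add: \<epsilon>_def n_def Y_def mult.commute)
qed

lemma (in prob_space) prob_abs_median_ge_le_half_tails:
  fixes X :: "nat \<Rightarrow> 'a \<Rightarrow> real"
  assumes "0 < t" and X: "\<And>i. i \<in> {1..t} \<Longrightarrow> X i \<in> borel_measurable M"
  shows "prob {\<omega>\<in>space M. x \<le> \<bar>median_list (map (\<lambda>i. X i \<omega>) [1..<t+1])\<bar>}
           \<le> prob {\<omega>\<in>space M. real t \<le> 2 * (\<Sum>i\<in>{1..t}. indicator {x..} (X i \<omega>))}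
             + prob {\<omega>\<in>space M. real t \<le> 2 * (\<Sum>i\<in>{1..t}. indicator {..-x} (X i \<omega>))}"
    (is "prob ?E \<le> prob ?T\<^sub>1 + prob ?T\<^sub>2")
proof -
  have "(\<lambda>\<omega>. \<Sum>i\<in>{1..t}. indicator A (X i \<omega>) :: real) \<in> borel_measurable M"
    if "A \<in> sets borel" for A
    using that by (intro borel_measurable_sum measurable_compose[OF X borel_measurable_indicator]) auto
  then have "?T\<^sub>1 \<in> sets M" and "?T\<^sub>2 \<in> sets M" by measurable
  moreover have "?E \<subseteq> ?T\<^sub>1 \<union> ?T\<^sub>2"
  proof
    fix \<omega> assume "\<omega> \<in> ?E"
    let ?xs = "map (\<lambda>i. X i \<omega>) [1..<t+1]"
    have "length ?xs \<le> 2 * length (filter (\<lambda>v. x \<le> v) ?xs)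
        \<or> length ?xs \<le> 2 * length (filter (\<lambda>v. v \<le> -x) ?xs)"
      using \<open>\<omega> \<in> ?E\<close> \<open>0 < t\<close> by (intro abs_median_list_ge_imp_half_tail) auto
    then have "real t \<le> 2 * real (length (filter (\<lambda>v. x \<le> v) ?xs))
             \<or> real t \<le> 2 * real (length (filter (\<lambda>v. v \<le> -x) ?xs))"
      by (simp only: length_map length_upt) linarith
    then show "\<omega> \<in> ?T\<^sub>1 \<union> ?T\<^sub>2"
      using \<open>\<omega> \<in> ?E\<close> unfolding length_filter_map_upt_eq_sum_indicator
      by (auto simp: atLeast_def atMost_def)
  qed
  ultimately show ?thesis
    by (meson finite_measure_mono measure_Un_le order_trans sets.Un)
qed

theorem lemma3p3:
  fixes M :: "'a measure" and X :: "nat \<Rightarrow> 'a \<Rightarrow> real"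
    and t :: nat and x p :: real
  assumes "prob_space M"
    and "\<And>i. i \<in> {1..t} \<Longrightarrow> X i \<in> borel_measurable M"
    and "prob_space.indep_vars M (\<lambda>_. borel) X {1..t}"
    and "\<And>i. i \<in> {1..t} \<Longrightarrow> symmetric_rv M (X i)"
    and "x > 0" and "p > 0"
    and "\<And>i. i \<in> {1..t} \<Longrightarrow> measure M {\<omega> \<in> space M. \<bar>X i \<omega>\<bar> < x} > p"
  shows "measure M {\<omega> \<in> space M. \<bar>median_list (map (\<lambda>i. X i \<omega>) [1..<t+1])\<bar> \<ge> x}
           < 2 * exp (- real t * p\<^sup>2 / 2)"
proof -
  interpret prob_space M by fact
  show ?thesis
  proof (cases "t = 0")
    case True
    then show ?thesis by (auto intro: le_less_trans[OF prob_le_1])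
  next
    case False
    have "prob {\<omega>\<in>space M. X i \<omega> \<in> {x..}} < (1 - p) / 2"
      and "prob {\<omega>\<in>space M. X i \<omega> \<in> {..-x}} < (1 - p) / 2" if "i \<in> {1..t}" for i
      using symmetric_rv_upper_tail_lt[OF assms(2,4)[OF that] \<open>x > 0\<close> assms(7)[OF that]]
        symmetric_rv_prob_ge_eq_prob_le[OF assms(2,4)[OF that], of x]
      by simp_all
    then have "prob {\<omega>\<in>space M. real t \<le> 2 * (\<Sum>i\<in>{1..t}. indicator {x..} (X i \<omega>))}
                 < exp (- real t * p\<^sup>2 / 2)"
      and "prob {\<omega>\<in>space M. real t \<le> 2 * (\<Sum>i\<in>{1..t}. indicator {..-x} (X i \<omega>))}
                 < exp (- real t * p\<^sup>2 / 2)"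
      using prob_half_in_set_lt_exp[OF _ _ assms(2,3)] False \<open>p > 0\<close> by auto
    moreover have "0 < t" using False by simp
    ultimately show ?thesis
      using prob_abs_median_ge_le_half_tails[where X = X and t = t and x = x, OF _ assms(2)]
      by linarith
  qed
qed

end
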